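(* Let $n\ge2$ and $\mathsf u\in\mathcal S_n$. Then $\mathsf r^{\mathsf u}\in\textsc{fact}(\lambda_n)$; that is, $\mathsf r^{\mathsf u}$ consists of $2n-2$ reflections whose product (in order) equals $\lambda_n$.
   Context: $\widetilde S_n$ is the group, under composition $(vw)(k)=v(w(k))$, of bijections $w:\mathbb Z\to\mathbb Z$ with $w(i+n)=w(i)+n$ and $\sum_{i=1}^n w(i)=\binom{n+1}2$. For $i\not\equiv j\pmod n$, $(\!(i,j)\!)$ swaps $i+kn$ and $j+kn$ for all $k\in\mathbb Z$; $s_i=(\!(i,i+1)\!)$ for $i\in\{0,\dots,n-1\}$. $\lambda_n\in\widetilde S_n$ is given by $\lambda_n(k)=k+n$ for $k\not\equiv0\pmod n$ and $\lambda_n(k)=k-n(n-1)$ for $k\equiv0\pmod n$; its reflection length is $2n-2$, and $\textsc{fact}(\lambda_n)$ is the set of sequences of $2n-2$ reflections whose product is $\lambda_n$. $\bm\lambda_n$ is the word $[s_0,\dots,s_{n-1}]$ repeated $n-1$ times, with $j$-th letter $\sigma_j=s_{(j-1)\bmod n}$ (index in $\{0,\dots,n-1\}$). A subword is $\mathsf u=[u_1,\dots,u_{n(n-1)}]$ with $u_j\in\{\sigma_j,e\}$; indices with $u_j=e$ are skips. Write $u_{(j)}=u_1\cdots u_j$ ($u_{(0)}=e$). $\mathcal S_n$ is the set of subwords with exactly $2n-2$ skips and $u_1\cdots u_{n(n-1)}=e$. $\textsc{inv}(\mathsf u)=[t_1,\dots,t_{n(n-1)}]$ with $t_j=u_{(j-1)}\sigma_ju_{(j-1)}^{-1}$,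 and $\mathsf r^{\mathsf u}$ is the subsequence of $\textsc{inv}(\mathsf u)$ consisting of the $t_j$ with $j$ a skip, in increasing order of $j$. *)

theory Defs
  imports Main
begin

text \<open>Affine symmetric group \<open>S~_n\<close>: bijections of the integers, n-periodic, with
  the window-sum normalisation. Group operation is composition \<open>(v w)(k) = v (w k)\<close>.\<close>
definition affine_perm :: "nat \<Rightarrow> (int \<Rightarrow> int) \<Rightarrow> bool" where
  "affine_perm n w \<longleftrightarrow> bij w \<and> (\<forall>i. w (i + int n) = w i + int n) \<and>
     (\<Sum>i=1..int n. w i) = int (n + 1 choose 2)"

text \<open>The reflection ((i,j)) for i, j not congruent mod n: swaps i+kn and j+kn for all k.\<close>
definition refl :: "nat \<Rightarrow> int \<Rightarrow> int \<Rightarrow> (int \<Rightarrow> int)" where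
  "refl n i j = (\<lambda>k. if k mod int n = i mod int n then k + (j - i)
                     else if k mod int n = j mod int n then k + (i - j) else k)"

definition is_reflection :: "nat \<Rightarrow> (int \<Rightarrow> int) \<Rightarrow> bool" where
  "is_reflection n t \<longleftrightarrow> (\<exists>i j. i mod int n \<noteq> j mod int n \<and> t = refl n i j)"

definition simple_refl :: "nat \<Rightarrow> nat \<Rightarrow> (int \<Rightarrow> int)" where
  "simple_refl n i = refl n (int i) (int i + 1)"

definition lambda_elt :: "nat \<Rightarrow> (int \<Rightarrow> int)" where
  "lambda_elt n = (\<lambda>k. if k mod int n \<noteq> 0 then k + int n else k - int n * (int n - 1))"

definition list_prod :: "(int \<Rightarrow> int) list \<Rightarrow> (int \<Rightarrow> int)" where
  "list_prod ts = foldr (\<circ>) ts id"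

definition fact_lambda :: "nat \<Rightarrow> (int \<Rightarrow> int) list set" where
  "fact_lambda n = {ts. length ts = 2 * n - 2 \<and> (\<forall>t \<in> set ts. is_reflection n t)
                        \<and> list_prod ts = lambda_elt n}"

text \<open>The j-th letter (j = 1..n(n-1)) of the word [s_0,...,s_{n-1}]^{n-1}.\<close>
definition sigma :: "nat \<Rightarrow> nat \<Rightarrow> (int \<Rightarrow> int)" where
  "sigma n j = simple_refl n ((j - 1) mod n)"

definition is_subword :: "nat \<Rightarrow> (nat \<Rightarrow> (int \<Rightarrow> int)) \<Rightarrow> bool" where
  "is_subword n u \<longleftrightarrow> (\<forall>j \<in> {1..n * (n - 1)}. u j = sigma n j \<or> u j = id)"

definition skips :: "nat \<Rightarrow> (nat \<Rightarrow> (int \<Rightarrow> int)) \<Rightarrow> nat set" where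
  "skips n u = {j \<in> {1..n * (n - 1)}. u j = id}"

primrec prefix :: "(nat \<Rightarrow> (int \<Rightarrow> int)) \<Rightarrow> nat \<Rightarrow> (int \<Rightarrow> int)" where
  "prefix u 0 = id"
| "prefix u (Suc j) = prefix u j \<circ> u (Suc j)"

definition S_set :: "nat \<Rightarrow> (nat \<Rightarrow> (int \<Rightarrow> int)) set" where
  "S_set n = {u. is_subword n u \<and> card (skips n u) = 2 * n - 2 \<and> prefix u (n * (n - 1)) = id}"

definition inv_elt :: "nat \<Rightarrow> (nat \<Rightarrow> (int \<Rightarrow> int)) \<Rightarrow> nat \<Rightarrow> (int \<Rightarrow> int)" where
  "inv_elt n u j = prefix u (j - 1) \<circ> sigma n j \<circ> inv (prefix u (j - 1))"

definition r_seq :: "nat \<Rightarrow> (nat \<Rightarrow> (int \<Rightarrow> int)) \<Rightarrow> (int \<Rightarrow> int) list" where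
  "r_seq n u = map (inv_elt n u) (filter (\<lambda>j. j \<in> skips n u) [1..<n * (n - 1) + 1])"

end

theory Submission imports Defs begin

text \<open>If \<open>j\<close> is a skip then \<open>t_j u_(j) = u_(j-1) sigma_j\<close>, and otherwise \<open>u_(j) = u_(j-1) sigma_j\<close>.
  Hence the product of \<open>r^u\<close> followed by \<open>u_(n(n-1)) = e\<close> telescopes to the product of the whole
  word, which is \<open>c^(n-1)\<close> for the Coxeter element \<open>c = s_0 s_1 ... s_(n-1)\<close>. This \<open>c\<close> lowers
  the multiples of \<open>n\<close> by \<open>n\<close> and moves every other integer one step along the increasing
  enumeration of the non-multiples of \<open>n\<close>, so \<open>c^(n-1) = lambda_n\<close>. Each \<open>t_j\<close> is a simple
  reflection conjugated by the \<open>n\<close>-periodic bijection \<open>u_(j-1)\<close>, hence a reflection.\<close>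

lemma mod_eq_iff_add_mult: "(x::int) mod m = y mod m \<longleftrightarrow> (\<exists>t. x = y + t * m)"
proof
  assume "x mod m = y mod m"
  then obtain t where "x - y = m * t"
    by (auto simp: mod_eq_dvd_iff elim: dvdE)
  then show "\<exists>t. x = y + t * m"
    by (intro exI[of _ t]) (simp add: algebra_simps)
qed auto

lemma mod_add_shift: "(k::int) mod m = i mod m \<Longrightarrow> (k + (j - i)) mod m = j mod m"
  using mod_add_cong[of k m i "j - i" "j - i"] by simp

lemma mod_neq_mod_succ:
  assumes "n \<ge> 2"
  shows "a mod int n \<noteq> (a + 1) mod int n"
proof
  assume "a mod int n = (a + 1) mod int n"
  then have "int n dvd 1"
    by (simp add: mod_eq_dvd_iff)
  then show False
    using assms by simp
qed

lemma list_prod_append: "list_prod (xs @ ys) = list_prod xs \<circ> list_prod ys"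
  unfolding list_prod_def by (induction xs) (simp_all add: comp_assoc)

lemma prefix_add: "prefix u (a + b) = prefix u a \<circ> prefix (\<lambda>j. u (a + j)) b"
  by (induction b) (simp_all add: comp_assoc)

lemma prefix_cong: "(\<And>j. 0 < j \<Longrightarrow> j \<le> m \<Longrightarrow> u j = v j) \<Longrightarrow> prefix u m = prefix v m"
  by (induction m) auto

text \<open>The letter \<open>u 0\<close> never enters \<open>prefix u\<close>, and periodicity is only required from index 1 on:
  \<open>sigma n\<close> is periodic there but not at 0, where \<open>0 - 1\<close> truncates.\<close>

lemma prefix_periodic:
  assumes "\<And>j. 0 < j \<Longrightarrow> u (j + p) = u j"
  shows "prefix u (k * p) = prefix u p ^^ k"
proof -
  have shift: "u (i * p + j) = u j" if "0 < j" for i j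
  proof (induction i)
    case (Suc i)
    have "u (Suc i * p + j) = u ((i * p + j) + p)" by (simp add: algebra_simps)
    also have "\<dots> = u (i * p + j)" using that by (intro assms) simp
    finally show ?case using Suc.IH by simp
  qed simp
  show ?thesis
  proof (induction k)
    case (Suc k)
    have "prefix u (Suc k * p) = prefix u (k * p) \<circ> prefix (\<lambda>j. u (k * p + j)) p"
      by (metis prefix_add add.commute mult_Suc)
    also have "prefix (\<lambda>j. u (k * p + j)) p = prefix u p"
      by (rule prefix_cong) (simp add: shift)
    finally show ?case
      by (simp only: Suc.IH funpow_Suc_right)
  qed simp
qed

lemma list_prod_skipped_conjugates:
  assumes "\<And>j. j \<in> {1..N} \<Longrightarrow> P j \<Longrightarrow> u j = id"
    and "\<And>j. j \<in> {1..N} \<Longrightarrow> \<not> P j \<Longrightarrow> u j = w j"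
    and "\<And>j. j < N \<Longrightarrow> inj (prefix u j)"
  shows "list_prod (map (\<lambda>j. prefix u (j - 1) \<circ> w j \<circ> inv (prefix u (j - 1)))
           (filter P [1..<N + 1])) \<circ> prefix u N = prefix w N"
  using assms
proof (induction N)
  case 0
  show ?case by (simp add: list_prod_def)
next
  case (Suc N)
  let ?t = "\<lambda>j. prefix u (j - 1) \<circ> w j \<circ> inv (prefix u (j - 1))"
  let ?last = "if P (Suc N) then ?t (Suc N) else id"
  define R where "R = list_prod (map ?t (filter P [1..<N + 1]))"
  have IH: "R \<circ> prefix u N = prefix w N"
    unfolding R_def by (rule Suc.IH) (use Suc.prems in auto)
  have last: "?last \<circ> prefix u (Suc N) = prefix u N \<circ> w (Suc N)"
  proof (cases "P (Suc N)")
    case True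
    then have "u (Suc N) = id" using Suc.prems(1)[of "Suc N"] by (simp add: id_def)
    moreover have "inv (prefix u N) \<circ> prefix u N = id"
      using Suc.prems(3)[of N] by simp
    ultimately show ?thesis
      using True by (simp add: comp_assoc)
  next
    case False
    then show ?thesis using Suc.prems(2)[of "Suc N"] by simp
  qed
  have "[1..<Suc N + 1] = [1..<N + 1] @ [Suc N]" by simp
  then have prod_split: "list_prod (map ?t (filter P [1..<Suc N + 1])) = R \<circ> ?last"
    unfolding R_def by (simp add: list_prod_append) (simp add: list_prod_def)
  have "list_prod (map ?t (filter P [1..<Suc N + 1])) \<circ> prefix u (Suc N)
      = R \<circ> (?last \<circ> prefix u (Suc N))"
    unfolding prod_split by (rule comp_assoc)
  also have "\<dots> = R \<circ> prefix u N \<circ> w (Suc N)"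
    unfolding last by (rule comp_assoc[symmetric])
  also have "\<dots> = prefix w (Suc N)"
    unfolding IH by simp
  finally show ?case .
qed

section \<open>Periodic bijections and reflections\<close>

definition periodic_bij :: "nat \<Rightarrow> (int \<Rightarrow> int) \<Rightarrow> bool" where
  "periodic_bij n w \<longleftrightarrow> bij w \<and> (\<forall>k. w (k + int n) = w k + int n)"

lemma periodic_bij_id: "periodic_bij n id"
  by (simp add: periodic_bij_def)

lemma periodic_bij_comp: "periodic_bij n v \<Longrightarrow> periodic_bij n w \<Longrightarrow> periodic_bij n (v \<circ> w)"
  by (simp add: periodic_bij_def bij_comp)

lemma periodic_bij_prefix:
  "(\<And>j. 0 < j \<Longrightarrow> j \<le> m \<Longrightarrow> periodic_bij n (u j)) \<Longrightarrow> periodic_bij n (prefix u m)"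
  by (induction m) (simp_all add: periodic_bij_id periodic_bij_comp)

lemma periodic_bij_add_mult:
  assumes "periodic_bij n w"
  shows "w (k + t * int n) = w k + t * int n"
proof (induction t rule: int_induct[where k = 0])
  case base
  show ?case by simp
next
  case (step1 i)
  have "w (k + i * int n + int n) = w (k + i * int n) + int n"
    using assms by (simp add: periodic_bij_def)
  then show ?case
    using step1.IH by (simp add: algebra_simps)
next
  case (step2 i)
  have "w (k + (i - 1) * int n + int n) = w (k + (i - 1) * int n) + int n"
    using assms by (simp add: periodic_bij_def)
  then show ?case
    using step2.IH by (simp add: algebra_simps)
qed

lemma periodic_bij_mod_eq_iff:
  assumes "periodic_bij n w"
  shows "w x mod int n = w y mod int n \<longleftrightarrow> x mod int n = y mod int n"
proof -
  have "w x = w y + t * int n \<longleftrightarrow> x = y + t * int n" for t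
    using periodic_bij_add_mult[OF assms, of y t] assms
    by (metis periodic_bij_def bij_is_inj inj_eq)
  then show ?thesis
    by (simp add: mod_eq_iff_add_mult)
qed

lemma periodic_bij_add_diff:
  assumes "periodic_bij n w" and "x mod int n = a mod int n"
  shows "w (x + (b - a)) = w x + (w b - w a)"
proof -
  obtain t where "x = a + t * int n"
    using assms(2) by (auto simp: mod_eq_iff_add_mult)
  then have "w (x + (b - a)) = w b + t * int n" and "w x = w a + t * int n"
    using periodic_bij_add_mult[OF assms(1)] by (simp_all add: algebra_simps)
  then show ?thesis by simp
qed

lemma periodic_bij_conj_refl:
  assumes "periodic_bij n w"
  shows "w \<circ> refl n i j \<circ> inv w = refl n (w i) (w j)"
proof -
  note mod_iff = periodic_bij_mod_eq_iff[OF assms]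
  have "w (refl n i j x) = refl n (w i) (w j) (w x)" for x
    using periodic_bij_add_diff[OF assms, of x i j] periodic_bij_add_diff[OF assms, of x j i]
    by (auto simp: refl_def mod_iff)
  then have "w \<circ> refl n i j = refl n (w i) (w j) \<circ> w" by auto
  moreover have "w \<circ> inv w = id"
    using assms by (metis periodic_bij_def bij_is_surj surj_iff)
  ultimately show ?thesis
    by (metis comp_assoc comp_id)
qed

lemma is_reflection_conj:
  assumes "periodic_bij n w" and "is_reflection n t"
  shows "is_reflection n (w \<circ> t \<circ> inv w)"
proof -
  obtain i j where "i mod int n \<noteq> j mod int n" and "t = refl n i j"
    using assms(2) is_reflection_def by auto
  then have "w i mod int n \<noteq> w j mod int n" and "w \<circ> t \<circ> inv w = refl n (w i) (w j)"
    using periodic_bij_mod_eq_iff[OF assms(1)] periodic_bij_conj_refl[OF assms(1)] by simp_all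
  then show ?thesis
    unfolding is_reflection_def by blast
qed

lemma refl_refl: "i mod int n \<noteq> j mod int n \<Longrightarrow> refl n i j (refl n i j k) = k"
  using mod_add_shift[of k "int n" i j] mod_add_shift[of k "int n" j i]
  by (auto simp: refl_def)

lemma refl_add_period: "refl n i j (k + int n) = refl n i j k + int n"
  by (simp add: refl_def)

lemma periodic_bij_reflection: "is_reflection n t \<Longrightarrow> periodic_bij n t"
  unfolding is_reflection_def periodic_bij_def
  by (auto intro: involuntory_imp_bij refl_refl simp: refl_add_period)

lemma is_reflection_sigma:
  assumes "n \<ge> 2"
  shows "is_reflection n (sigma n j)"
proof -
  define a where "a = int ((j - 1) mod n)"
  have "a mod int n \<noteq> (a + 1) mod int n"
    using mod_neq_mod_succ[OF assms] .
  then show ?thesis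
    unfolding is_reflection_def sigma_def simple_refl_def a_def by blast
qed

section \<open>The Coxeter element\<close>

lemma prefix_sigma_below:
  assumes "m < n"
  shows "prefix (sigma n) m k =
    (if k mod int n < int m then k + 1 else if k mod int n = int m then k - int m else k)"
  using assms
proof (induction m arbitrary: k)
  case 0
  then have "0 \<le> k mod int n" by simp
  then show ?case by simp
next
  case (Suc m)
  have step: "prefix (sigma n) (Suc m) k = prefix (sigma n) m (simple_refl n m k)"
    using Suc.prems by (simp add: sigma_def)
  have "(k + 1) mod int n = int m + 1" if "k mod int n = int m"
    using mod_add_shift[of k "int n" "int m" "int m + 1"] that Suc.prems by simp
  moreover have "(k - 1) mod int n = int m" if "k mod int n = int m + 1"
    using mod_add_shift[of k "int n" "int m + 1" "int m"] that Suc.prems by simp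
  ultimately show ?case
    using Suc.IH[of "k + 1"] Suc.IH[of "k - 1"] Suc.IH[of k] Suc.prems step
    by (auto simp: simple_refl_def refl_def)
qed

definition coxeter :: "nat \<Rightarrow> int \<Rightarrow> int" where
  "coxeter n = prefix (sigma n) n"

lemma coxeter_apply:
  assumes "n \<ge> 2"
  shows "coxeter n k = (if k mod int n = 0 then k - int n
    else if k mod int n = int n - 1 then k + 2 else k + 1)"
proof -
  obtain m where n: "n = Suc m" and "m < n" and m: "int m = int n - 1"
    using assms by (cases n) auto
  have cox: "coxeter n k = prefix (sigma n) m (simple_refl n m k)"
    using n by (simp add: coxeter_def sigma_def)
  note below = prefix_sigma_below[OF \<open>m < n\<close>]
  have m_mod: "int m mod int n = int m" and m_succ_mod: "(int m + 1) mod int n = 0"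
    and "int m \<noteq> 0"
    using n assms by (simp_all add: add.commute)
  have "0 \<le> k mod int n" "k mod int n < int n"
    using n by simp_all
  then consider "k mod int n = 0" | "k mod int n = int m" | "0 < k mod int n" "k mod int n < int m"
    using m by linarith
  then show ?thesis
  proof cases
    case 1
    then have "(k - 1) mod int n = int m"
      using mod_add_shift[of k "int n" "int n" "int m"] n by simp
    then show ?thesis
      using cox below 1 m_mod m_succ_mod \<open>int m \<noteq> 0\<close> m by (simp add: simple_refl_def refl_def)
  next
    case 2
    then have "(k + 1) mod int n = 0"
      using mod_add_shift[of k "int n" "int m" "int n"] n by simp
    then show ?thesis
      using cox below 2 m_mod m_succ_mod \<open>int m \<noteq> 0\<close> m by (simp add: simple_refl_def refl_def)
  next
    case 3
    then show ?thesis
      using cox below m_mod m_succ_mod m by (simp add: simple_refl_def refl_def)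
  qed
qed

lemma coxeter_pow_of_mod_eq_0:
  assumes "n \<ge> 2" and "k mod int n = 0"
  shows "(coxeter n ^^ j) k = k - int j * int n"
proof (induction j)
  case (Suc j)
  have "(k - int j * int n) mod int n = 0"
    using assms(2) by (auto simp: mod_eq_0_iff_dvd intro: dvd_diff)
  then have "coxeter n (k - int j * int n) = k - int j * int n - int n"
    by (simp add: coxeter_apply[OF assms(1)])
  moreover have "(coxeter n ^^ Suc j) k = coxeter n (k - int j * int n)"
    by (simp only: funpow.simps comp_apply Suc.IH)
  ultimately show ?case
    by (simp add: algebra_simps)
qed simp

text \<open>Off the multiples of \<open>n\<close>, \<open>coxeter n\<close> is the translation \<open>m \<mapsto> m + 1\<close> of \<open>\<int>\<close>, transported
  along the increasing bijection \<open>m \<mapsto> m + m div (n - 1) + 1\<close> onto the non-multiples of \<open>n\<close>.\<close>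

lemma coxeter_shift:
  assumes "n \<ge> 2"
  shows "coxeter n (m + m div (int n - 1) + 1) = (m + 1) + (m + 1) div (int n - 1) + 1"
proof -
  define d where "d = int n - 1"
  define q where "q = m div d"
  define r where "r = m mod d"
  have d: "d > 0" and r: "0 \<le> r" "r < d" and m: "m = d * q + r"
    using assms by (simp_all add: d_def q_def r_def)
  have "m + q + 1 = r + 1 + int n * q"
    using m by (simp add: d_def algebra_simps)
  then have "(m + q + 1) mod int n = (r + 1) mod int n"
    by (simp only: mod_mult_self2)
  then have res: "(m + q + 1) mod int n = r + 1"
    using r by (simp add: d_def)
  show ?thesis
  proof (cases "r = d - 1")
    case True
    then have "m + 1 = d * (q + 1)"
      using m by (simp add: algebra_simps)
    then have "(m + 1) div d = q + 1"
      using d by simp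
    then show ?thesis
      using res True assms by (simp add: coxeter_apply[OF assms] d_def q_def)
  next
    case False
    then have "(m + 1) div d = q"
      using m r by (simp add: add.assoc div_add_self1)
    then show ?thesis
      using res False r by (simp add: coxeter_apply[OF assms] d_def q_def)
  qed
qed

lemma coxeter_pow_shift:
  assumes "n \<ge> 2"
  shows "(coxeter n ^^ j) (m + m div (int n - 1) + 1)
    = (m + int j) + (m + int j) div (int n - 1) + 1"
proof (induction j)
  case (Suc j)
  then show ?case
    using coxeter_shift[OF assms, of "m + int j"] by (simp add: ac_simps)
qed simp

lemma coxeter_pow_eq_lambda:
  assumes "n \<ge> 2"
  shows "coxeter n ^^ (n - 1) = lambda_elt n"
proof
  fix k
  show "(coxeter n ^^ (n - 1)) k = lambda_elt n k"
  proof (cases "k mod int n = 0")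
    case True
    then show ?thesis
      using coxeter_pow_of_mod_eq_0[OF assms True, of "n - 1"] assms
      by (simp add: lambda_elt_def of_nat_diff algebra_simps)
  next
    case False
    define d where "d = int n - 1"
    define m where "m = d * (k div int n) + (k mod int n - 1)"
    have "0 \<le> k mod int n" "k mod int n < int n"
      using assms by simp_all
    then have "0 \<le> k mod int n - 1" "k mod int n - 1 < d"
      using False by (simp_all add: d_def)
    then have "m div d = k div int n"
      by (simp add: m_def)
    then have k: "k = m + m div d + 1"
      by (simp add: m_def d_def algebra_simps)
    have "d \<noteq> 0"
      using assms by (simp add: d_def)
    then have "(m + d) div d = m div d + 1"
      by (rule div_add_self2)
    then show ?thesis
      using coxeter_pow_shift[OF assms, of "n - 1" m] k False assms
      by (simp add: lambda_elt_def d_def of_nat_diff)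
  qed
qed

lemma prefix_sigma_eq_lambda:
  assumes "n \<ge> 2"
  shows "prefix (sigma n) (n * (n - 1)) = lambda_elt n"
proof -
  have "sigma n (j + n) = sigma n j" if "0 < j" for j
  proof -
    have "j + n - 1 = (j - 1) + n" using that by simp
    then show ?thesis by (simp add: sigma_def)
  qed
  then have "prefix (sigma n) ((n - 1) * n) = coxeter n ^^ (n - 1)"
    unfolding coxeter_def by (rule prefix_periodic)
  then show ?thesis
    using coxeter_pow_eq_lambda[OF assms] by (simp add: mult.commute)
qed

lemma length_r_seq: "length (r_seq n u) = card (skips n u)"
proof -
  have set_filter_upt: "set (filter P [1..<N + 1]) = {j \<in> {1..N}. P j}" for P and N :: nat
    by auto
  have "set (filter (\<lambda>j. j \<in> skips n u) [1..<n * (n - 1) + 1]) = skips n u"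
    unfolding set_filter_upt by (auto simp: skips_def)
  then show ?thesis
    unfolding r_seq_def by (metis distinct_card distinct_filter distinct_upt length_map)
qed

lemma periodic_bij_prefix_subword:
  assumes "n \<ge> 2" and "is_subword n u" and "m \<le> n * (n - 1)"
  shows "periodic_bij n (prefix u m)"
proof (rule periodic_bij_prefix)
  fix j assume "0 < j" and "j \<le> m"
  then have "u j = sigma n j \<or> u j = id"
    using assms(2,3) by (simp add: is_subword_def)
  then show "periodic_bij n (u j)"
    using periodic_bij_reflection[OF is_reflection_sigma[OF assms(1)]] periodic_bij_id by auto
qed

lemma r_seq_reflection:
  assumes "n \<ge> 2" and "is_subword n u" and "t \<in> set (r_seq n u)"
  shows "is_reflection n t"
proof -
  obtain j where "j \<in> skips n u" and t: "t = inv_elt n u j"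
    using assms(3) by (auto simp: r_seq_def)
  then have "j \<le> n * (n - 1)"
    by (simp add: skips_def)
  then have "j - 1 \<le> n * (n - 1)"
    by (rule le_trans[OF diff_le_self])
  then have "periodic_bij n (prefix u (j - 1))"
    by (rule periodic_bij_prefix_subword[OF assms(1,2)])
  then show ?thesis
    unfolding t inv_elt_def by (rule is_reflection_conj) (rule is_reflection_sigma[OF assms(1)])
qed

lemma list_prod_r_seq:
  assumes "n \<ge> 2" and "is_subword n u"
  shows "list_prod (r_seq n u) \<circ> prefix u (n * (n - 1)) = prefix (sigma n) (n * (n - 1))"
  unfolding r_seq_def inv_elt_def[abs_def]
proof (rule list_prod_skipped_conjugates)
  fix j assume "j \<in> {1..n * (n - 1)}"
  then show "j \<in> skips n u \<Longrightarrow> u j = id" and "j \<notin> skips n u \<Longrightarrow> u j = sigma n j"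
    using assms(2) by (auto simp: skips_def is_subword_def)
next
  fix j assume "j < n * (n - 1)"
  then show "inj (prefix u j)"
    using periodic_bij_prefix_subword[OF assms] by (simp add: periodic_bij_def bij_is_inj)
qed

theorem corollary5p10:
  fixes n :: nat and u :: "nat \<Rightarrow> (int \<Rightarrow> int)"
  assumes "n \<ge> 2" and "u \<in> S_set n"
  shows "r_seq n u \<in> fact_lambda n"
proof -
  have subword: "is_subword n u" and card: "card (skips n u) = 2 * n - 2"
    and closed: "prefix u (n * (n - 1)) = id"
    using assms(2) by (simp_all add: S_set_def)
  have "list_prod (r_seq n u) = lambda_elt n"
    using list_prod_r_seq[OF assms(1) subword] closed prefix_sigma_eq_lambda[OF assms(1)] by simp
  then show ?thesis
    using length_r_seq card r_seq_reflection[OF assms(1) subword] by (simp add: fact_lambda_def)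
qed

end
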